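(* Let $f(s)$, $g(s)$, $h(s)$ be holomorphic in an open neighborhood of $s_0\in\mathbb{C}$, and assume $|f(s_0)|=|g(s_0)|$. Then for every integer $k\geq1$, the residue \[ \mathop{\mathrm{Res}}_{s=s_0}\frac{(f(s)g(s))^k}{(s-s_0)^{2k}}h(s) \] equals $|f(s_0)|=|g(s_0)|$ times a $\mathbb{C}$-linear combination of monomials in the derivative values $f^{(\ell)}(s_0)$, $g^{(\ell)}(s_0)$, $h^{(\ell)}(s_0)$ for $\ell\in\{0,\dots,2k-1\}$, where the monomials occurring and the moduli of the coefficients depend only on $k$. *)

theory Defs
  imports "HOL-Complex_Analysis.Complex_Analysis"
begin

text \<open>A monomial in the derivative values is an exponent vector
  m :: nat \<times> nat \<Rightarrow> nat, where m (i, l) is the exponent of the l-th derivative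
  of the i-th function (i = 0: f, i = 1: g, i = 2: h), l ranging over 0..2k-1.\<close>

type_synonym monomial = "nat \<times> nat \<Rightarrow> nat"

definition deriv_val ::
  "(complex \<Rightarrow> complex) \<Rightarrow> (complex \<Rightarrow> complex) \<Rightarrow> (complex \<Rightarrow> complex)
    \<Rightarrow> complex \<Rightarrow> nat \<Rightarrow> nat \<Rightarrow> complex" where
  "deriv_val f g h s0 i l = (deriv ^^ l) ([f, g, h] ! i) s0"

definition mono_eval ::
  "nat \<Rightarrow> (complex \<Rightarrow> complex) \<Rightarrow> (complex \<Rightarrow> complex) \<Rightarrow> (complex \<Rightarrow> complex)
    \<Rightarrow> complex \<Rightarrow> monomial \<Rightarrow> complex" where
  "mono_eval k f g h s0 m =
     (\<Prod>(i, l)\<in>{0..<3} \<times> {0..<2*k}. deriv_val f g h s0 i l ^ m (i, l))"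

end

theory Submission
  imports Defs
begin

(* The residue is the (2k-1)-st derivative at s0 of the product of the 2k+1 factors
   f, ..., f, g, ..., g, h, divided by (2k-1)!.  The general Leibniz rule expands this
   derivative as a sum over the compositions of 2k-1 into 2k+1 parts, with multinomial
   coefficients depending only on k.  Since 2k-1 < 2k, in every composition one of the
   f- or g-factors is not differentiated at all; it contributes f(s0) or g(s0), that is
   |f(s0)| times a unimodular number, which is absorbed into the coefficient. *)

definition compositions :: "nat \<Rightarrow> nat \<Rightarrow> nat list set" where
  "compositions N n = {xs. length xs = N \<and> sum_list xs = n}"

lemma finite_compositions: "finite (compositions N n)"
proof (rule finite_subset[OF _ finite_lists_length_eq[of "{..n}" N]])
  show "compositions N n \<subseteq> {xs. set xs \<subseteq> {..n} \<and> length xs = N}"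
    by (auto simp: compositions_def dest: member_le_sum_list)
qed auto

lemma compositions_0: "compositions 0 n = (if n = 0 then {[]} else {})"
  by (auto simp: compositions_def)

lemma compositions_Suc:
  "compositions (Suc N) n = (\<Union>i\<le>n. (#) i ` compositions N (n - i))"
  by (fastforce simp: compositions_def length_Suc_conv)

fun multinomial :: "nat list \<Rightarrow> nat" where
  "multinomial [] = 1"
| "multinomial (i # xs) = (i + sum_list xs choose i) * multinomial xs"

lemma higher_deriv_prod:
  fixes \<phi> :: "nat \<Rightarrow> complex \<Rightarrow> complex"
  assumes "\<And>j. j < N \<Longrightarrow> \<phi> j holomorphic_on S" "open S" "z \<in> S"
  shows "(deriv ^^ n) (\<lambda>w. \<Prod>j<N. \<phi> j w) z =
    (\<Sum>xs\<in>compositions N n. of_nat (multinomial xs) * (\<Prod>j<N. (deriv ^^ (xs ! j)) (\<phi> j) z))"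
  using assms(1)
proof (induction N arbitrary: \<phi> n)
  case 0
  then show ?case by (simp add: compositions_0)
next
  case (Suc N)
  let ?tail = "\<lambda>w. \<Prod>j<N. \<phi> (Suc j) w"
  have hol_tail: "?tail holomorphic_on S"
    using Suc.prems by (intro holomorphic_on_prod) auto
  have "(deriv ^^ n) (\<lambda>w. \<Prod>j<Suc N. \<phi> j w) z = (deriv ^^ n) (\<lambda>w. \<phi> 0 w * ?tail w) z"
    by (simp only: prod.lessThan_Suc_shift)
  also have "\<dots> = (\<Sum>i\<le>n. of_nat (n choose i) * (deriv ^^ i) (\<phi> 0) z * (deriv ^^ (n - i)) ?tail z)"
    using higher_deriv_mult[OF _ hol_tail assms(2,3)] Suc.prems by (simp add: atLeast0AtMost)
  also have "\<dots> = (\<Sum>i\<le>n. \<Sum>xs\<in>compositions N (n - i).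
      of_nat (multinomial (i # xs)) * (\<Prod>j<Suc N. (deriv ^^ ((i # xs) ! j)) (\<phi> j) z))"
  proof (intro sum.cong refl)
    fix i assume "i \<in> {..n}"
    have coeff: "multinomial (i # xs) = (n choose i) * multinomial xs"
      if "xs \<in> compositions N (n - i)" for xs
      using that \<open>i \<in> {..n}\<close> by (simp add: compositions_def)
    have prod_shift: "(\<Prod>j<Suc N. (deriv ^^ ((i # xs) ! j)) (\<phi> j) z)
        = (deriv ^^ i) (\<phi> 0) z * (\<Prod>j<N. (deriv ^^ (xs ! j)) (\<phi> (Suc j)) z)" for xs
      by (simp only: prod.lessThan_Suc_shift) simp
    have IH: "(deriv ^^ (n - i)) ?tail z = (\<Sum>xs\<in>compositions N (n - i).
        of_nat (multinomial xs) * (\<Prod>j<N. (deriv ^^ (xs ! j)) (\<phi> (Suc j)) z))"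
      by (rule Suc.IH) (simp add: Suc.prems)
    show "of_nat (n choose i) * (deriv ^^ i) (\<phi> 0) z * (deriv ^^ (n - i)) ?tail z
      = (\<Sum>xs\<in>compositions N (n - i).
          of_nat (multinomial (i # xs)) * (\<Prod>j<Suc N. (deriv ^^ ((i # xs) ! j)) (\<phi> j) z))"
      unfolding IH sum_distrib_left
      by (intro sum.cong refl) (simp only: coeff prod_shift of_nat_mult mult_ac)
  qed
  also have "\<dots> = (\<Sum>xs\<in>compositions (Suc N) n.
      of_nat (multinomial xs) * (\<Prod>j<Suc N. (deriv ^^ (xs ! j)) (\<phi> j) z))"
    unfolding compositions_Suc
    by (subst sum.UNION_disjoint) (auto simp: finite_compositions sum.reindex)
  finally show ?case .
qed

lemma residue_prod_over_power:
  fixes \<phi> :: "nat \<Rightarrow> complex \<Rightarrow> complex"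
  assumes "\<And>j. j < N \<Longrightarrow> \<phi> j holomorphic_on S" "open S" "z \<in> S"
  shows "residue (\<lambda>w. (\<Prod>j<N. \<phi> j w) / (w - z) ^ Suc n) z =
    (\<Sum>xs\<in>compositions N n.
       of_nat (multinomial xs) / fact n * (\<Prod>j<N. (deriv ^^ (xs ! j)) (\<phi> j) z))"
proof -
  have "(\<lambda>w. \<Prod>j<N. \<phi> j w) holomorphic_on S"
    using assms(1) by (intro holomorphic_on_prod) auto
  then show ?thesis
    using residue_holomorphic_over_power[OF assms(2,3)] higher_deriv_prod[OF assms]
    by (simp add: sum_divide_distrib)
qed

lemma prod_comp_eq_prod_power_card:
  fixes G :: "'b \<Rightarrow> 'c::comm_monoid_mult"
  assumes "finite J" "finite B" "p ` J \<subseteq> B"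
  shows "(\<Prod>j\<in>J. G (p j)) = (\<Prod>q\<in>B. G q ^ card {j\<in>J. p j = q})"
proof -
  have "(\<Prod>j\<in>J. G (p j)) = (\<Prod>q\<in>B. \<Prod>j\<in>{j\<in>J. p j = q}. G (p j))"
    by (rule prod.group[OF assms, symmetric])
  also have "\<dots> = (\<Prod>q\<in>B. G q ^ card {j\<in>J. p j = q})"
    by (intro prod.cong refl) simp
  finally show ?thesis .
qed

definition first_zero :: "nat list \<Rightarrow> nat" where
  "first_zero xs = (LEAST j. xs ! j = 0)"

lemma first_zero_pigeonhole:
  assumes "m \<le> length xs" "sum_list xs < m"
  shows "first_zero xs < m" "xs ! first_zero xs = 0"
proof -
  obtain j where j: "j < m" "xs ! j = 0"
  proof (rule ccontr)
    assume "\<not> thesis"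
    with that have "\<forall>j<m. 1 \<le> xs ! j" by (auto simp: Suc_le_eq)
    then have "m \<le> (\<Sum>j<m. xs ! j)"
      using sum_mono[of "{..<m}" "\<lambda>_. 1::nat"] by simp
    also have "\<dots> \<le> (\<Sum>j<length xs. xs ! j)"
      using assms(1) by (intro sum_mono2) auto
    finally show False
      using assms(2) by (simp add: sum_list_sum_nth atLeast0LessThan)
  qed
  show "xs ! first_zero xs = 0"
    unfolding first_zero_def using j(2) by (rule LeastI)
  show "first_zero xs < m"
    unfolding first_zero_def using j by (meson Least_le le_less_trans)
qed

definition factor_kind :: "nat \<Rightarrow> nat \<Rightarrow> nat" where
  "factor_kind k j = (if j < k then 0 else if j < 2 * k then 1 else 2)"

lemma prod_factor_kind:
  "(\<Prod>j<Suc (2 * k). ([f, g, h] ! factor_kind k j) s) = (f s * g s) ^ k * h s"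
proof -
  have "(\<Prod>j<2 * k. ([f, g, h] ! factor_kind k j) s)
      = (\<Prod>j<k. ([f, g, h] ! factor_kind k j) s) * (\<Prod>j\<in>{k..<2 * k}. ([f, g, h] ! factor_kind k j) s)"
    by (simp add: prod.atLeastLessThan_concat[symmetric] lessThan_atLeast0)
  also have "\<dots> = f s ^ k * g s ^ k"
    by (simp add: factor_kind_def)
  finally show ?thesis
    by (simp add: factor_kind_def power_mult_distrib)
qed

(* Row i = 3 is ignored by mono_eval; it records xs itself, so that distinct terms of the
   expansion, whose unimodular factors may differ, stay distinct monomials. *)
definition term_monomial :: "nat \<Rightarrow> nat list \<Rightarrow> monomial" where
  "term_monomial k xs = (\<lambda>(i, l). if i = 3 then xs ! l
     else card {j \<in> {..<Suc (2 * k)} - {first_zero xs}. (factor_kind k j, xs ! j) = (i, l)})"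

lemma inj_on_term_monomial: "inj_on (term_monomial k) {xs. length xs = n}"
proof (rule inj_onI)
  fix xs ys assume "xs \<in> {xs. length xs = n}" "ys \<in> {xs. length xs = n}"
    and eq: "term_monomial k xs = term_monomial k ys"
  moreover have "xs ! l = ys ! l" for l
    using fun_cong[OF eq, of "(3, l)"] by (simp add: term_monomial_def)
  ultimately show "xs = ys"
    by (simp add: nth_equalityI)
qed

lemma mono_eval_term_monomial:
  assumes "length xs = Suc (2 * k)" "sum_list xs < 2 * k"
  shows "mono_eval k f g h s0 (term_monomial k xs) =
    (\<Prod>j\<in>{..<Suc (2 * k)} - {first_zero xs}. deriv_val f g h s0 (factor_kind k j) (xs ! j))"
proof -
  let ?J = "{..<Suc (2 * k)} - {first_zero xs}"
  have "xs ! j < 2 * k" if "j < Suc (2 * k)" for j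
    using elem_le_sum_list[of j xs] that assms by simp
  then have "(\<lambda>j. (factor_kind k j, xs ! j)) ` ?J \<subseteq> {0..<3} \<times> {0..<2 * k}"
    by (auto simp: factor_kind_def)
  then have "(\<Prod>j\<in>?J. deriv_val f g h s0 (factor_kind k j) (xs ! j)) =
      (\<Prod>q\<in>{0..<3} \<times> {0..<2 * k}. case_prod (deriv_val f g h s0) q
         ^ card {j\<in>?J. (factor_kind k j, xs ! j) = q})"
    using prod_comp_eq_prod_power_card[of ?J _ "\<lambda>j. (factor_kind k j, xs ! j)"
        "case_prod (deriv_val f g h s0)"] by simp
  also have "\<dots> = mono_eval k f g h s0 (term_monomial k xs)"
    unfolding mono_eval_def by (intro prod.cong) (auto simp: term_monomial_def)
  finally show ?thesis ..
qed

lemma prod_higher_derivs_factor_kind: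
  assumes "length xs = Suc (2 * k)" "sum_list xs < 2 * k"
  shows "(\<Prod>j<Suc (2 * k). (deriv ^^ (xs ! j)) ([f, g, h] ! factor_kind k j) s0) =
    ([f, g, h] ! factor_kind k (first_zero xs)) s0 * mono_eval k f g h s0 (term_monomial k xs)"
proof -
  have fz: "first_zero xs < 2 * k" "xs ! first_zero xs = 0"
    using first_zero_pigeonhole[of "2 * k" xs] assms by simp_all
  have "(\<Prod>j<Suc (2 * k). (deriv ^^ (xs ! j)) ([f, g, h] ! factor_kind k j) s0) =
      (deriv ^^ (xs ! first_zero xs)) ([f, g, h] ! factor_kind k (first_zero xs)) s0 *
      (\<Prod>j\<in>{..<Suc (2 * k)} - {first_zero xs}. (deriv ^^ (xs ! j)) ([f, g, h] ! factor_kind k j) s0)"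
    by (rule prod.remove) (use fz in auto)
  then show ?thesis
    using fz by (simp add: mono_eval_term_monomial[OF assms] deriv_val_def)
qed

lemma residue_power_expansion:
  assumes "k \<ge> 1" "open S" "s0 \<in> S"
    and "f holomorphic_on S" "g holomorphic_on S" "h holomorphic_on S"
  shows "residue (\<lambda>s. (f s * g s) ^ k / (s - s0) ^ (2 * k) * h s) s0 =
    (\<Sum>xs\<in>compositions (Suc (2 * k)) (2 * k - 1). of_nat (multinomial xs) / fact (2 * k - 1) *
       ([f, g, h] ! factor_kind k (first_zero xs)) s0 * mono_eval k f g h s0 (term_monomial k xs))"
proof -
  have hol: "[f, g, h] ! factor_kind k j holomorphic_on S" for j
    using assms(4-6) by (simp add: factor_kind_def)
  have integrand: "(\<lambda>s. (f s * g s) ^ k / (s - s0) ^ (2 * k) * h s) =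
      (\<lambda>s. (\<Prod>j<Suc (2 * k). ([f, g, h] ! factor_kind k j) s) / (s - s0) ^ Suc (2 * k - 1))"
    using assms(1) by (simp add: prod_factor_kind del: prod.lessThan_Suc)
  have "residue (\<lambda>s. (f s * g s) ^ k / (s - s0) ^ (2 * k) * h s) s0 =
      (\<Sum>xs\<in>compositions (Suc (2 * k)) (2 * k - 1). of_nat (multinomial xs) / fact (2 * k - 1) *
         (\<Prod>j<Suc (2 * k). (deriv ^^ (xs ! j)) ([f, g, h] ! factor_kind k j) s0))"
    unfolding integrand by (rule residue_prod_over_power[OF hol assms(2,3)])
  also have "\<dots> = (\<Sum>xs\<in>compositions (Suc (2 * k)) (2 * k - 1). of_nat (multinomial xs) / fact (2 * k - 1) *
       ([f, g, h] ! factor_kind k (first_zero xs)) s0 * mono_eval k f g h s0 (term_monomial k xs))"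
    using assms(1)
    by (intro sum.cong refl)
      (simp add: compositions_def prod_higher_derivs_factor_kind mult.assoc del: prod.lessThan_Suc)
  finally show ?thesis .
qed

lemma norm_first_zero_factor:
  assumes "xs \<in> compositions (Suc (2 * k)) (2 * k - 1)" "k \<ge> 1" "norm (f s0) = norm (g s0)"
  shows "norm (([f, g, h] ! factor_kind k (first_zero xs)) s0) = norm (f s0)"
proof -
  have "first_zero xs < 2 * k"
    using assms(1,2) first_zero_pigeonhole[of "2 * k" xs] by (simp add: compositions_def)
  then show ?thesis
    using assms(3) by (simp add: factor_kind_def)
qed

lemma residue_power_expansion_polar:
  assumes "k \<ge> 1" "open S" "s0 \<in> S"
    and "f holomorphic_on S" "g holomorphic_on S" "h holomorphic_on S"
    and "norm (f s0) = norm (g s0)"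
  shows "residue (\<lambda>s. (f s * g s) ^ k / (s - s0) ^ (2 * k) * h s) s0 =
    of_real (norm (f s0)) *
    (\<Sum>xs\<in>compositions (Suc (2 * k)) (2 * k - 1). of_nat (multinomial xs) / fact (2 * k - 1) *
       cis (Arg (([f, g, h] ! factor_kind k (first_zero xs)) s0)) *
       mono_eval k f g h s0 (term_monomial k xs))"
proof -
  have polar: "([f, g, h] ! factor_kind k (first_zero xs)) s0 =
      of_real (norm (f s0)) * cis (Arg (([f, g, h] ! factor_kind k (first_zero xs)) s0))"
    if "xs \<in> compositions (Suc (2 * k)) (2 * k - 1)" for xs
    using rcis_cmod_Arg[of "([f, g, h] ! factor_kind k (first_zero xs)) s0"]
      norm_first_zero_factor[of xs k f s0 g h, OF that assms(1,7)]
    by (simp add: rcis_def)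
  show ?thesis
    unfolding residue_power_expansion[OF assms(1-6)] sum_distrib_left
    by (intro sum.cong refl) (subst polar, simp_all add: mult_ac)
qed

lemma residue_power_expansion_monomials:
  assumes "k \<ge> 1" "open S" "s0 \<in> S"
    and "f holomorphic_on S" "g holomorphic_on S" "h holomorphic_on S"
    and "norm (f s0) = norm (g s0)"
  defines "A \<equiv> compositions (Suc (2 * k)) (2 * k - 1)"
  shows "residue (\<lambda>s. (f s * g s) ^ k / (s - s0) ^ (2 * k) * h s) s0 =
    of_real (norm (f s0)) *
    (\<Sum>m\<in>term_monomial k ` A. of_nat (multinomial (inv_into A (term_monomial k) m)) / fact (2 * k - 1) *
       cis (Arg (([f, g, h] ! factor_kind k (first_zero (inv_into A (term_monomial k) m))) s0)) *
       mono_eval k f g h s0 m)"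
proof -
  have inj: "inj_on (term_monomial k) A"
    unfolding A_def by (rule inj_on_subset[OF inj_on_term_monomial]) (auto simp: compositions_def)
  show ?thesis
    unfolding residue_power_expansion_polar[OF assms(1-7)] sum.reindex[OF inj] A_def[symmetric]
    by (intro arg_cong[where f = "\<lambda>x. _ * x"] sum.cong refl) (simp add: inv_into_f_f[OF inj])
qed

theorem lemma3p2:
  fixes k :: nat
  assumes "k \<ge> 1"
  shows "\<exists>(M :: monomial set) (r :: monomial \<Rightarrow> real). finite M \<and>
    (\<forall>(f :: complex \<Rightarrow> complex) (g :: complex \<Rightarrow> complex) (h :: complex \<Rightarrow> complex)
        (s0 :: complex) (S :: complex set).
       open S \<and> s0 \<in> S \<and> f holomorphic_on S \<and> g holomorphic_on S \<and> h holomorphic_on S \<and>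
       norm (f s0) = norm (g s0) \<longrightarrow>
       (\<exists>c :: monomial \<Rightarrow> complex. (\<forall>m\<in>M. norm (c m) = r m) \<and>
          residue (\<lambda>s. (f s * g s) ^ k / (s - s0) ^ (2 * k) * h s) s0 =
            complex_of_real (norm (f s0)) * (\<Sum>m\<in>M. c m * mono_eval k f g h s0 m)))"
proof -
  let ?A = "compositions (Suc (2 * k)) (2 * k - 1)"
  let ?xs_of = "inv_into ?A (term_monomial k)"
  define r where "r m = real (multinomial (?xs_of m)) / fact (2 * k - 1)" for m
  show ?thesis
  proof (intro exI[of _ "term_monomial k ` ?A"] exI[of _ r] conjI allI impI)
    show "finite (term_monomial k ` ?A)"
      by (simp add: finite_compositions)
    fix f g h :: "complex \<Rightarrow> complex" and s0 S
    assume "open S \<and> s0 \<in> S \<and> f holomorphic_on S \<and> g holomorphic_on S \<and> h holomorphic_on S \<and>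
      norm (f s0) = norm (g s0)"
    then show "\<exists>c. (\<forall>m\<in>term_monomial k ` ?A. norm (c m) = r m) \<and>
        residue (\<lambda>s. (f s * g s) ^ k / (s - s0) ^ (2 * k) * h s) s0 =
        of_real (norm (f s0)) * (\<Sum>m\<in>term_monomial k ` ?A. c m * mono_eval k f g h s0 m)"
      using residue_power_expansion_monomials[of k S s0 f g h] assms
      by (intro exI[where x = "\<lambda>m. of_real (r m) *
          cis (Arg (([f, g, h] ! factor_kind k (first_zero (?xs_of m))) s0))"])
        (simp add: r_def norm_mult norm_divide mult_ac)
  qed
qed

end
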